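(* Let $\Omega\subset\mathbb{C}^d$ be an open convex set, $p\in\Omega$ and $x\in\partial\Omega$, and suppose $\delta_\Omega(p;x-p)\ge\epsilon\|x-p\|$ for some $\epsilon>0$. For $t\ge0$ put $x_t=x+e^{-2t}(p-x)$. Then $$|t_1-t_2|\le d_\Omega(x_{t_1},x_{t_2})\le 2\epsilon^{-1}|t_1-t_2|\quad\text{for all } t_1,t_2\ge0.$$ In particular the segment $[p,x)$ can be parametrized as a $(2\epsilon^{-1},0)$-quasi-geodesic in $(\Omega,d_\Omega)$.
   Context: $d_\Omega$ is the Kobayashi (pseudo-)distance. For $p\in\Omega$ and $v\neq0$, $\delta_\Omega(p;v)=\inf\{\|q-p\|: q\in(p+\mathbb{C}v)\setminus\Omega\}$. A curve $\sigma$ is an $(A,B)$-quasi-geodesic if $A^{-1}|t_1-t_2|-B\le d(\sigma(t_1),\sigma(t_2))\le A|t_1-t_2|+B$. *)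

theory Defs
  imports "HOL-Analysis.Analysis"
begin

text \<open>Poincare distance on the unit disc, normalised so that
  rho(0,r) = (1/2) ln((1+r)/(1-r)) = artanh r.\<close>
definition poincare_dist :: "complex \<Rightarrow> complex \<Rightarrow> real" where
  "poincare_dist a b = artanh (cmod (a - b) / cmod (1 - cnj a * b))"

definition holo_disc :: "(complex^'n) set \<Rightarrow> (complex \<Rightarrow> complex^'n) \<Rightarrow> bool" where
  "holo_disc \<Omega> f \<longleftrightarrow> (\<forall>i. (\<lambda>z. f z $ i) holomorphic_on ball 0 1) \<and> f ` ball 0 1 \<subseteq> \<Omega>"

definition lempert :: "(complex^'n) set \<Rightarrow> complex^'n \<Rightarrow> complex^'n \<Rightarrow> real" where
  "lempert \<Omega> z w = Inf {poincare_dist a b | a b f. holo_disc \<Omega> f \<and> a \<in> ball 0 1 \<and>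
       b \<in> ball 0 1 \<and> f a = z \<and> f b = w}"

definition kobayashi_dist :: "(complex^'n) set \<Rightarrow> complex^'n \<Rightarrow> complex^'n \<Rightarrow> real" where
  "kobayashi_dist \<Omega> z w = Inf {(\<Sum>i<n. lempert \<Omega> (c i) (c (Suc i))) | n c.
       c 0 = z \<and> c n = w \<and> (\<forall>i\<le>n. c i \<in> \<Omega>)}"

definition delta_dir :: "(complex^'n) set \<Rightarrow> complex^'n \<Rightarrow> complex^'n \<Rightarrow> real" where
  "delta_dir \<Omega> p v = Inf {norm (q - p) | q. q \<in> {p + c *s v | c. True} - \<Omega>}"

definition quasi_geodesic ::
  "('a \<Rightarrow> 'a \<Rightarrow> real) \<Rightarrow> real \<Rightarrow> real \<Rightarrow> real set \<Rightarrow> (real \<Rightarrow> 'a) \<Rightarrow> bool" where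
  "quasi_geodesic d A B I \<sigma> \<longleftrightarrow> (\<forall>t1\<in>I. \<forall>t2\<in>I.
      \<bar>t1 - t2\<bar> / A - B \<le> d (\<sigma> t1) (\<sigma> t2) \<and> d (\<sigma> t1) (\<sigma> t2) \<le> A * \<bar>t1 - t2\<bar> + B)"

end

theory Submission
  imports Defs "HOL-Complex_Analysis.Complex_Analysis" "HOL-Real_Asymp.Real_Asymp"
begin

text \<open>
  Lower bound: since x \<notin> \<Omega>, the domain lies in a half-space {Re l > 0} for a complex-linear
  functional l vanishing at x. Composing a holomorphic disc with l and the Cayley transform gives a
  self-map of the disc, so by Schwarz--Pick the function (1/2) ln |l| is 1-Lipschitz for the Lempert
  function, hence for the Kobayashi distance. Along the ray l(x_t) = e^{-2t} l(p), which yields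
  |t_1 - t_2|.

  Upper bound: the hypothesis on \<delta>_\<Omega> puts the complex disc p + \<epsilon>\<Delta>(x - p) into \<Omega>; shrinking it
  towards x by the factor e^{-2s} gives, by convexity, a disc centred at x_s through x_t, so the
  Lempert function of x_s, x_t is at most artanh((e^{2|t-s|} - 1)/\<epsilon>). Chaining N such steps
  between x_{t_1} and x_{t_2} and letting N \<rightarrow> \<infinity> gives 2|t_1 - t_2|/\<epsilon>.
\<close>

section \<open>Hyperbolic geometry of the disc and the right half-plane\<close>

lemma artanh_real_mono:
  fixes x y :: real assumes "-1 < x" "x \<le> y" "y < 1"
  shows "artanh x \<le> artanh y"
proof -
  have "(1 + x) / (1 - x) \<le> (1 + y) / (1 - y)"
    using assms by (simp add: divide_simps) (simp add: algebra_simps)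
  moreover have "0 < (1 + x) / (1 - x)" using assms by simp
  ultimately show ?thesis unfolding artanh_def by simp
qed

lemma artanh_abs_diff_div_add:
  fixes r s :: real assumes "0 < r" "0 < s"
  shows "artanh (\<bar>r - s\<bar> / (r + s)) = \<bar>ln r - ln s\<bar> / 2"
proof -
  have *: "artanh ((a - b) / (a + b)) = (ln a - ln b) / 2" if "0 < b" "b \<le> a" for a b :: real
  proof -
    have "1 + (a - b) / (a + b) = 2 * a / (a + b)" "1 - (a - b) / (a + b) = 2 * b / (a + b)"
      using that by (simp_all add: field_simps)
    then have "(1 + (a - b) / (a + b)) / (1 - (a - b) / (a + b)) = a / b"
      using that by simp
    then show ?thesis using that unfolding artanh_def by (simp add: ln_div)
  qed
  show ?thesis
  proof (cases "s \<le> r")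
    case True
    then show ?thesis using *[of s r] assms by simp
  next
    case False
    then show ?thesis using *[of r s] assms by (simp add: abs_minus_commute add.commute)
  qed
qed

lemma abs_ln_norm_diff_le_artanh:
  fixes u v :: complex
  assumes "0 < Re u" "0 < Re v" and lt1: "cmod (u - v) / cmod (u + cnj v) < 1"
  shows "\<bar>ln (cmod u) - ln (cmod v)\<bar> / 2 \<le> artanh (cmod (u - v) / cmod (u + cnj v))"
proof -
  have pos: "0 < cmod u" "0 < cmod v" using assms by auto
  have "\<bar>cmod u - cmod v\<bar> / (cmod u + cmod v) \<le> cmod (u - v) / cmod (u + cnj v)"
  proof (rule frac_le)
    show "0 < cmod (u + cnj v)" using assms by (auto simp: complex_eq_iff)
    show "cmod (u + cnj v) \<le> cmod u + cmod v"
      using norm_triangle_ineq[of u "cnj v"] by simp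
  qed (auto simp: norm_triangle_ineq3)
  then have "artanh (\<bar>cmod u - cmod v\<bar> / (cmod u + cmod v)) \<le> artanh (cmod (u - v) / cmod (u + cnj v))"
    using pos by (intro artanh_real_mono lt1) (auto intro: order.strict_trans2[of _ 0])
  then show ?thesis
    using pos by (simp add: artanh_abs_diff_div_add)
qed

lemma cayley_pseudo_hyperbolic:
  fixes g h :: complex
  assumes "0 < Re g" "0 < Re h"
  shows "cmod ((g - 1)/(g + 1) - (h - 1)/(h + 1)) / cmod (1 - cnj ((g - 1)/(g + 1)) * ((h - 1)/(h + 1)))
       = cmod (g - h) / cmod (g + cnj h)"
proof -
  have nz: "g + 1 \<noteq> 0" "h + 1 \<noteq> 0" "cnj g + 1 \<noteq> 0" using assms by (auto simp: complex_eq_iff)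
  have "(g - 1)/(g + 1) - (h - 1)/(h + 1) = 2 * (g - h) / ((g + 1) * (h + 1))"
    using nz by (simp add: field_simps)
  moreover have "1 - cnj ((g - 1)/(g + 1)) * ((h - 1)/(h + 1))
      = ((cnj g + 1) * (h + 1) - (cnj g - 1) * (h - 1)) / ((cnj g + 1) * (h + 1))"
    using nz by (subst diff_divide_distrib) (simp add: times_divide_times_eq)
  moreover have "(cnj g + 1) * (h + 1) - (cnj g - 1) * (h - 1) = 2 * (cnj g + h)"
    by (simp add: algebra_simps)
  moreover have "cmod (cnj g + 1) = cmod (g + 1)" "cmod (cnj g + h) = cmod (g + cnj h)"
    by (metis complex_cnj_add complex_cnj_one complex_mod_cnj,
        metis complex_cnj_add complex_cnj_cnj complex_mod_cnj)
  ultimately show ?thesis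
    using nz by (simp add: norm_divide norm_mult del: distrib_left_numeral right_diff_distrib_numeral)
qed

lemma cayley_norm_lt_1:
  fixes g :: complex assumes "0 < Re g"
  shows "cmod ((g - 1)/(g + 1)) < 1"
proof -
  have "(cmod (g - 1))^2 < (cmod (g + 1))^2"
    using assms by (simp only: cmod_power2) (simp add: power2_eq_square algebra_simps)
  then have "cmod (g - 1) < cmod (g + 1)" by (simp add: power2_less_imp_less)
  then show ?thesis by (simp add: norm_divide divide_less_eq)
qed

lemma pseudo_hyperbolic_lt_1:
  assumes "a \<in> ball 0 1" "b \<in> ball 0 1"
  shows "cmod (a - b) / cmod (1 - cnj a * b) < 1"
proof -
  have "norm (Moebius_function 0 a b) < 1"
    using Moebius_function_norm_lt_1 assms by auto
  then show ?thesis by (simp add: Moebius_function_simple norm_divide norm_minus_commute)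
qed

lemma poincare_dist_nonneg:
  assumes "a \<in> ball 0 1" "b \<in> ball 0 1"
  shows "0 \<le> poincare_dist a b"
  using artanh_real_mono[of 0] pseudo_hyperbolic_lt_1[OF assms] unfolding poincare_dist_def by simp

lemma Schwarz_Pick:
  assumes holh: "h holomorphic_on ball 0 1" and hD: "h ` ball 0 1 \<subseteq> ball 0 1"
    and a: "a \<in> ball 0 1" and b: "b \<in> ball 0 1"
  shows "cmod (h a - h b) / cmod (1 - cnj (h a) * h b) \<le> cmod (a - b) / cmod (1 - cnj a * b)"
proof -
  define k where "k = Moebius_function 0 (h a) \<circ> h \<circ> Moebius_function 0 (-a)"
  have na: "norm (-a) < 1" "norm a < 1" using a by auto
  have nha: "norm (h a) < 1" using hD a by force
  have M: "Moebius_function 0 (-a) ` ball 0 1 \<subseteq> ball 0 1"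
    using Moebius_function_norm_lt_1[OF na(1)] by auto
  have "k holomorphic_on ball 0 1"
    unfolding k_def o_assoc[symmetric]
    by (intro holomorphic_on_compose_gen[OF _ Moebius_function_holomorphic[OF nha]]
        holomorphic_on_compose_gen[OF Moebius_function_holomorphic[OF na(1)] holh M])
      (use M hD in auto)
  moreover have "k 0 = 0"
    unfolding k_def by (simp add: Moebius_function_simple Moebius_function_eq_zero)
  moreover have "norm (k z) < 1" if "norm z < 1" for z
  proof -
    have "h (Moebius_function 0 (-a) z) \<in> ball 0 1"
      using M hD that by (auto simp: image_subset_iff)
    then show ?thesis
      unfolding k_def using Moebius_function_norm_lt_1[OF nha] by simp
  qed
  moreover have "norm (Moebius_function 0 a b) < 1"
    using Moebius_function_norm_lt_1 na(2) b by auto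
  ultimately have "norm (k (Moebius_function 0 a b)) \<le> norm (Moebius_function 0 a b)"
    by (rule Schwarz_Lemma(1))
  moreover have "k (Moebius_function 0 a b) = Moebius_function 0 (h a) (h b)"
    unfolding k_def using Moebius_function_compose[of "-a" a b] na b by simp
  ultimately show ?thesis
    by (simp add: Moebius_function_simple norm_divide norm_minus_commute)
qed

section \<open>Lempert function and Kobayashi distance of convex domains\<close>

text \<open>Without such a disc the infimum defining the Lempert function would range over the empty
  set, where Inf is unspecified.\<close>

lemma convex_holo_disc_through:
  fixes \<Omega> :: "(complex^'n) set"
  assumes op: "open \<Omega>" and cv: "convex \<Omega>" and z: "z \<in> \<Omega>" and w: "w \<in> \<Omega>"
  obtains f a b where "holo_disc \<Omega> f" "a \<in> ball 0 1" "b \<in> ball 0 1" "f a = z" "f b = w"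
proof -
  define g where "g = (\<lambda>\<zeta>::complex. (\<chi> i. z$i + \<zeta> * (w$i - z$i)) :: complex^'n)"
  define L where "L = g -` \<Omega>"
  have g01: "g 0 = z" "g 1 = w" unfolding g_def by (simp_all add: vec_eq_iff)
  have L01: "0 \<in> L" "1 \<in> L" unfolding L_def using g01 z w by auto
  have "open L" unfolding L_def
    by (rule open_vimage[OF op]) (simp add: g_def continuous_on_vec_lambda continuous_intros)
  moreover have "convex L"
  proof -
    have "g ((1 - u) *\<^sub>R \<xi> + u *\<^sub>R \<eta>) = (1 - u) *\<^sub>R g \<xi> + u *\<^sub>R g \<eta>" for u \<xi> \<eta>
      by (simp add: g_def vec_eq_iff) (simp add: scaleR_conv_of_real algebra_simps)
    then show ?thesis
      using cv unfolding L_def convex_alt by auto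
  qed
  ultimately obtain G where G: "G holomorphic_on ball 0 1" "G ` ball 0 1 \<subseteq> L"
    and G01: "0 \<in> G ` ball 0 1" "1 \<in> G ` ball 0 1"
  proof (cases "L = UNIV")
    case True
    then show ?thesis
      by (intro that[of "\<lambda>\<zeta>. 2 * \<zeta>"]) (auto intro!: holomorphic_intros image_eqI[of 1 _ "1/2"])
  next
    case False
    have "open L \<and> simply_connected L"
      using \<open>open L\<close> convex_imp_simply_connected[OF \<open>convex L\<close>] by simp
    then obtain F G where "G holomorphic_on ball 0 1"
      and "\<forall>z \<in> L. F z \<in> ball 0 1 \<and> G (F z) = z" and "\<forall>z \<in> ball 0 1. G z \<in> L \<and> F (G z) = z"
      unfolding Riemann_mapping_theorem using False L01 by blast
    then show ?thesis using L01 by (intro that[of G]) (auto intro!: image_eqI)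
  qed
  obtain a b where ab: "a \<in> ball 0 1" "b \<in> ball 0 1" "G a = 0" "G b = 1"
    using G01 by (metis imageE)
  show ?thesis
  proof (rule that[of "g \<circ> G" a b])
    show "holo_disc \<Omega> (g \<circ> G)"
      unfolding holo_disc_def using G by (auto simp: g_def L_def intro!: holomorphic_intros)
  qed (use ab g01 in auto)
qed

lemma lempert_le_poincare_dist:
  assumes "holo_disc \<Omega> f" "a \<in> ball 0 1" "b \<in> ball 0 1"
  shows "lempert \<Omega> (f a) (f b) \<le> poincare_dist a b"
  unfolding lempert_def
  by (rule cInf_lower) (use assms in \<open>auto intro!: bdd_belowI[of _ 0] poincare_dist_nonneg\<close>)

lemma lempert_greatest:
  fixes \<Omega> :: "(complex^'n) set"
  assumes "open \<Omega>" "convex \<Omega>" "z \<in> \<Omega>" "w \<in> \<Omega>"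
    and "\<And>f a b. holo_disc \<Omega> f \<Longrightarrow> a \<in> ball 0 1 \<Longrightarrow> b \<in> ball 0 1 \<Longrightarrow> f a = z \<Longrightarrow> f b = w
         \<Longrightarrow> K \<le> poincare_dist a b"
  shows "K \<le> lempert \<Omega> z w"
  unfolding lempert_def
proof (rule cInf_greatest)
  obtain f a b where "holo_disc \<Omega> f" "a \<in> ball 0 1" "b \<in> ball 0 1" "f a = z" "f b = w"
    using convex_holo_disc_through[OF assms(1-4)] .
  then show "{poincare_dist a b | a b f. holo_disc \<Omega> f \<and> a \<in> ball 0 1 \<and>
       b \<in> ball 0 1 \<and> f a = z \<and> f b = w} \<noteq> {}" by blast
qed (use assms(5) in blast)

lemma lempert_nonneg:
  fixes \<Omega> :: "(complex^'n) set"
  assumes "open \<Omega>" "convex \<Omega>" "z \<in> \<Omega>" "w \<in> \<Omega>"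
  shows "0 \<le> lempert \<Omega> z w"
  using assms by (intro lempert_greatest poincare_dist_nonneg)

lemma kobayashi_dist_le_chain:
  fixes \<Omega> :: "(complex^'n) set"
  assumes "open \<Omega>" "convex \<Omega>" "c 0 = z" "c n = w" "\<forall>i\<le>n. c i \<in> \<Omega>"
  shows "kobayashi_dist \<Omega> z w \<le> (\<Sum>i<n. lempert \<Omega> (c i) (c (Suc i)))"
  unfolding kobayashi_dist_def
proof (rule cInf_lower)
  show "bdd_below {(\<Sum>i<n. lempert \<Omega> (c i) (c (Suc i))) | n c.
       c 0 = z \<and> c n = w \<and> (\<forall>i\<le>n. c i \<in> \<Omega>)}"
  proof (rule bdd_belowI[of _ 0], clarify)
    fix m and d :: "nat \<Rightarrow> complex^'n"
    assume "\<forall>i\<le>m. d i \<in> \<Omega>"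
    then show "0 \<le> (\<Sum>i<m. lempert \<Omega> (d i) (d (Suc i)))"
      by (intro sum_nonneg lempert_nonneg[OF assms(1,2)]) auto
  qed
qed (use assms in blast)

lemma abs_diff_le_kobayashi_dist:
  fixes \<Omega> :: "(complex^'n) set"
  assumes z: "z \<in> \<Omega>" and w: "w \<in> \<Omega>"
    and lip: "\<And>u v. u \<in> \<Omega> \<Longrightarrow> v \<in> \<Omega> \<Longrightarrow> \<bar>F u - F v\<bar> \<le> lempert \<Omega> u v"
  shows "\<bar>F z - F w\<bar> \<le> kobayashi_dist \<Omega> z w"
  unfolding kobayashi_dist_def
proof (rule cInf_greatest)
  define c where "c = (\<lambda>i::nat. if i = 0 then z else w)"
  have "c 0 = z \<and> c 1 = w \<and> (\<forall>i\<le>1. c i \<in> \<Omega>)"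
    using z w unfolding c_def by auto
  then show "{(\<Sum>i<n. lempert \<Omega> (c i) (c (Suc i))) | n c.
       c 0 = z \<and> c n = w \<and> (\<forall>i\<le>n. c i \<in> \<Omega>)} \<noteq> {}" by blast
next
  fix K assume "K \<in> {(\<Sum>i<n. lempert \<Omega> (c i) (c (Suc i))) | n c.
       c 0 = z \<and> c n = w \<and> (\<forall>i\<le>n. c i \<in> \<Omega>)}"
  then obtain n c where K: "K = (\<Sum>i<n. lempert \<Omega> (c i) (c (Suc i)))"
    and c: "c 0 = z" "c n = w" "\<forall>i\<le>n. c i \<in> \<Omega>" by blast
  have "\<bar>F (c 0) - F (c m)\<bar> \<le> (\<Sum>i<m. lempert \<Omega> (c i) (c (Suc i)))" if "m \<le> n" for m
    using that
  proof (induction m)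
    case (Suc m)
    then have "\<bar>F (c m) - F (c (Suc m))\<bar> \<le> lempert \<Omega> (c m) (c (Suc m))"
      using lip c(3) by simp
    with Suc show ?case by simp
  qed simp
  from this[OF order_refl] show "\<bar>F z - F w\<bar> \<le> K" using K c by simp
qed

section \<open>The ray from p to x\<close>

definition ray_point :: "complex^'n \<Rightarrow> complex^'n \<Rightarrow> real \<Rightarrow> complex^'n" where
  "ray_point x p t = x + exp (-2 * t) *\<^sub>R (p - x)"

lemma open_convex_shrink_mem:
  fixes \<Omega> :: "'a::euclidean_space set"
  assumes "open \<Omega>" "convex \<Omega>" "q \<in> \<Omega>" "x \<in> closure \<Omega>" "0 < c" "c \<le> 1"
  shows "x + c *\<^sub>R (q - x) \<in> \<Omega>"
  using mem_interior_closure_convex_shrink[of \<Omega> q x c] assms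
  by (simp add: interior_open algebra_simps)

lemma ray_point_mem:
  assumes "open \<Omega>" "convex \<Omega>" "p \<in> \<Omega>" "x \<in> closure \<Omega>" "0 \<le> t"
  shows "ray_point x p t \<in> \<Omega>"
  unfolding ray_point_def using assms by (intro open_convex_shrink_mem) auto

lemma ray_point_image:
  "ray_point x p ` {0..} = {p + s *\<^sub>R (x - p) | s. 0 \<le> s \<and> s < 1}"
proof -
  have comp: "ray_point x p = (\<lambda>s. p + s *\<^sub>R (x - p)) \<circ> (\<lambda>t. 1 - exp (-2 * t))"
    by (simp add: fun_eq_iff ray_point_def algebra_simps)
  have range: "(\<lambda>t. 1 - exp (-2 * t)) ` {0..} = {0..<1::real}"
  proof (intro equalityI subsetI)
    fix s :: real assume "s \<in> {0..<1}"
    then have "s = 1 - exp (-2 * (- ln (1 - s) / 2))" "0 \<le> - ln (1 - s) / 2" by auto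
    then show "s \<in> (\<lambda>t. 1 - exp (-2 * t)) ` {0..}" by fastforce
  qed auto
  show ?thesis
    unfolding comp image_comp[symmetric] range by (auto simp: Setcompr_eq_image)
qed

section \<open>The lower bound from a separating functional\<close>

definition cinner :: "complex^'n \<Rightarrow> complex^'n \<Rightarrow> complex" where
  "cinner a v = (\<Sum>i\<in>UNIV. cnj (a$i) * v$i)"

lemma Re_cinner: "Re (cinner a v) = inner a v"
  by (simp add: cinner_def inner_vec_def inner_complex_def)

lemma cinner_scaleR_right: "cinner a (r *\<^sub>R v) = of_real r * cinner a v"
  by (simp add: cinner_def sum_distrib_left) (simp add: scaleR_conv_of_real mult.left_commute)

lemma open_convex_separating_cinner:
  fixes \<Omega> :: "(complex^'n) set"
  assumes op: "open \<Omega>" and cv: "convex \<Omega>" and x: "x \<notin> \<Omega>"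
  obtains a where "\<forall>y\<in>\<Omega>. 0 < Re (cinner a (y - x))"
proof -
  have "convex ((\<lambda>y. y - x) ` \<Omega>)" "0 \<notin> (\<lambda>y. y - x) ` \<Omega>"
    using cv x by (auto simp: convex_translation_subtract)
  then obtain a where a: "a \<noteq> 0" "\<forall>y\<in>\<Omega>. 0 \<le> inner a (y - x)"
    using separating_hyperplane_set_0 by (metis image_eqI)
  have "0 < inner a (y - x)" if y: "y \<in> \<Omega>" for y
  proof -
    obtain e where e: "e > 0" "ball y e \<subseteq> \<Omega>" using op y open_contains_ball by blast
    define y' where "y' = y - (e / 2 / norm a) *\<^sub>R a"
    have "dist y y' = e / 2" unfolding y'_def dist_norm using a e by simp
    with e have "y' \<in> \<Omega>" by auto
    then have "0 \<le> inner a (y' - x)" using a by blast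
    also have "inner a (y' - x) = inner a (y - x) - e / 2 * norm a"
      using a by (simp add: y'_def inner_diff_right dot_square_norm power2_eq_square)
    finally show ?thesis
      using a e by (smt (verit) mult_pos_pos zero_less_divide_iff zero_less_norm_iff)
  qed
  then show ?thesis using that by (auto simp: Re_cinner)
qed

lemma abs_ln_norm_cinner_le_poincare_dist:
  fixes \<Omega> :: "(complex^'n) set"
  assumes f: "holo_disc \<Omega> f" and \<zeta>: "\<zeta> \<in> ball 0 1" and \<eta>: "\<eta> \<in> ball 0 1"
    and pos: "\<forall>y\<in>\<Omega>. 0 < Re (cinner a (y - x))"
  shows "\<bar>ln (cmod (cinner a (f \<zeta> - x))) - ln (cmod (cinner a (f \<eta> - x)))\<bar> / 2 \<le> poincare_dist \<zeta> \<eta>"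
proof -
  define g where "g = (\<lambda>\<xi>. cinner a (f \<xi> - x))"
  define h where "h = (\<lambda>\<xi>. (g \<xi> - 1) / (g \<xi> + 1))"
  have gpos: "0 < Re (g \<xi>)" if "\<xi> \<in> ball 0 1" for \<xi>
    using pos f that unfolding holo_disc_def g_def by (auto simp: image_subset_iff)
  have "g holomorphic_on ball 0 1"
    using f unfolding g_def cinner_def holo_disc_def by (auto intro!: holomorphic_intros)
  moreover have "g \<xi> + 1 \<noteq> 0" if "\<xi> \<in> ball 0 1" for \<xi>
    using gpos[OF that] by (auto simp: complex_eq_iff)
  ultimately have "h holomorphic_on ball 0 1"
    unfolding h_def by (intro holomorphic_intros)
  moreover have hD: "h ` ball 0 1 \<subseteq> ball 0 1"
    using cayley_norm_lt_1[OF gpos] unfolding h_def by auto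
  ultimately have SP: "cmod (h \<zeta> - h \<eta>) / cmod (1 - cnj (h \<zeta>) * h \<eta>) \<le> cmod (\<zeta> - \<eta>) / cmod (1 - cnj \<zeta> * \<eta>)"
    using Schwarz_Pick \<zeta> \<eta> by blast
  have lt1: "cmod (h \<zeta> - h \<eta>) / cmod (1 - cnj (h \<zeta>) * h \<eta>) < 1"
    using hD \<zeta> \<eta> by (intro pseudo_hyperbolic_lt_1) (auto simp: image_subset_iff)
  have "cmod (h \<zeta> - h \<eta>) / cmod (1 - cnj (h \<zeta>) * h \<eta>) = cmod (g \<zeta> - g \<eta>) / cmod (g \<zeta> + cnj (g \<eta>))"
    unfolding h_def using cayley_pseudo_hyperbolic[OF gpos[OF \<zeta>] gpos[OF \<eta>]] .
  then have "\<bar>ln (cmod (g \<zeta>)) - ln (cmod (g \<eta>))\<bar> / 2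
      \<le> artanh (cmod (h \<zeta> - h \<eta>) / cmod (1 - cnj (h \<zeta>) * h \<eta>))"
    using abs_ln_norm_diff_le_artanh[OF gpos[OF \<zeta>] gpos[OF \<eta>]] lt1 by simp
  also have "\<dots> \<le> poincare_dist \<zeta> \<eta>"
    unfolding poincare_dist_def
    using SP pseudo_hyperbolic_lt_1[OF \<zeta> \<eta>]
    by (intro artanh_real_mono) (auto intro: less_le_trans[of "-1" 0])
  finally show ?thesis unfolding g_def .
qed

lemma abs_ln_norm_cinner_le_kobayashi_dist:
  fixes \<Omega> :: "(complex^'n) set"
  assumes "open \<Omega>" "convex \<Omega>" "z \<in> \<Omega>" "w \<in> \<Omega>"
    and pos: "\<forall>y\<in>\<Omega>. 0 < Re (cinner a (y - x))"
  shows "\<bar>ln (cmod (cinner a (z - x))) - ln (cmod (cinner a (w - x)))\<bar> / 2 \<le> kobayashi_dist \<Omega> z w"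
proof -
  define F where "F = (\<lambda>y. ln (cmod (cinner a (y - x))) / 2)"
  have "\<bar>F z - F w\<bar> \<le> kobayashi_dist \<Omega> z w"
  proof (rule abs_diff_le_kobayashi_dist[OF assms(3,4)])
    fix u v assume "u \<in> \<Omega>" "v \<in> \<Omega>"
    then show "\<bar>F u - F v\<bar> \<le> lempert \<Omega> u v"
      using assms(1,2) abs_ln_norm_cinner_le_poincare_dist[OF _ _ _ pos]
      by (intro lempert_greatest) (auto simp: F_def abs_divide diff_divide_distrib[symmetric])
  qed
  then show ?thesis by (simp add: F_def abs_divide diff_divide_distrib[symmetric])
qed

lemma kobayashi_dist_ray_point_ge:
  fixes \<Omega> :: "(complex^'n) set"
  assumes op: "open \<Omega>" and cv: "convex \<Omega>" and p: "p \<in> \<Omega>" and x: "x \<in> frontier \<Omega>"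
    and t1: "0 \<le> t1" and t2: "0 \<le> t2"
  shows "\<bar>t1 - t2\<bar> \<le> kobayashi_dist \<Omega> (ray_point x p t1) (ray_point x p t2)"
proof -
  have "x \<notin> \<Omega>" "x \<in> closure \<Omega>" using x op by (auto simp: frontier_def interior_open)
  then obtain a where pos: "\<forall>y\<in>\<Omega>. 0 < Re (cinner a (y - x))"
    using open_convex_separating_cinner[OF op cv] by blast
  then have "cinner a (p - x) \<noteq> 0" using p by fastforce
  then have "ln (cmod (cinner a (ray_point x p t - x))) = -2 * t + ln (cmod (cinner a (p - x)))" for t
    by (simp add: ray_point_def cinner_scaleR_right norm_mult ln_mult)
  then have "\<bar>t1 - t2\<bar> = \<bar>ln (cmod (cinner a (ray_point x p t1 - x)))
      - ln (cmod (cinner a (ray_point x p t2 - x)))\<bar> / 2"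
    by (auto simp: abs_if)
  also have "\<dots> \<le> kobayashi_dist \<Omega> (ray_point x p t1) (ray_point x p t2)"
    using ray_point_mem[OF op cv p \<open>x \<in> closure \<Omega>\<close>] t1 t2
    by (intro abs_ln_norm_cinner_le_kobayashi_dist[OF op cv _ _ pos]) auto
  finally show ?thesis .
qed

section \<open>The upper bound from discs along the ray\<close>

lemma abs_one_minus_exp_le: "\<bar>1 - exp (u::real)\<bar> \<le> exp \<bar>u\<bar> - 1"
proof (cases "0 \<le> u")
  case False
  have "1 + u \<le> exp u" "1 - u \<le> exp (-u)"
    using exp_ge_add_one_self[of u] exp_ge_add_one_self[of "-u"] by simp_all
  moreover have "\<bar>1 - exp u\<bar> = 1 - exp u" "exp \<bar>u\<bar> = exp (-u)"
    using False by simp_all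
  ultimately show ?thesis by linarith
qed simp

lemma norm_smult_vec: "norm (c *s (v::complex^'n)) = cmod c * norm v"
proof -
  have "norm (c *s v) = L2_set (\<lambda>i. cmod c * norm (v$i)) UNIV"
    unfolding norm_vec_def by (simp add: norm_mult)
  also have "\<dots> = cmod c * norm v"
    unfolding norm_vec_def by (rule L2_set_right_distrib[symmetric]) simp
  finally show ?thesis .
qed

lemma of_real_smult_vec: "of_real r *s (v::complex^'n) = r *\<^sub>R v"
  by (simp add: vec_eq_iff) (simp add: scaleR_conv_of_real)

lemma delta_dir_le_norm:
  assumes "p + c *s v \<notin> \<Omega>"
  shows "delta_dir \<Omega> p v \<le> norm (c *s v)"
  unfolding delta_dir_def
  by (rule cInf_lower) (use assms in \<open>force intro: bdd_belowI[of _ 0]\<close>)+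

lemma mem_if_norm_less_delta_dir:
  assumes "norm (c *s v) < delta_dir \<Omega> p v"
  shows "p + c *s v \<in> \<Omega>"
  using delta_dir_le_norm assms by force

lemma delta_dir_le_norm_diff:
  assumes "x \<notin> \<Omega>"
  shows "delta_dir \<Omega> p (x - p) \<le> norm (x - p)"
  using delta_dir_le_norm[of p 1 "x - p" \<Omega>] assms by (simp add: norm_smult_vec)

text \<open>The disc p + \<epsilon>\<Delta>(x - p) lies in \<Omega> by the hypothesis on delta_dir; the homothety of
  ratio e^{-2s} centred at x maps it onto the disc below, which stays in \<Omega> by convexity.\<close>

lemma ray_point_disc_mem:
  fixes \<Omega> :: "(complex^'n) set"
  assumes op: "open \<Omega>" and cv: "convex \<Omega>" and p: "p \<in> \<Omega>" and x: "x \<in> frontier \<Omega>"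
    and \<epsilon>: "\<epsilon> > 0" and \<delta>: "\<epsilon> * norm (x - p) \<le> delta_dir \<Omega> p (x - p)"
    and s: "0 \<le> s" and \<zeta>: "\<zeta> \<in> ball 0 1"
  shows "ray_point x p s + (of_real (\<epsilon> * exp (-2 * s)) * \<zeta>) *s (x - p) \<in> \<Omega>"
proof -
  define q where "q = p + (of_real \<epsilon> * \<zeta>) *s (x - p)"
  have "x \<noteq> p" using x p op by (auto simp: frontier_def interior_open)
  then have "\<epsilon> * cmod \<zeta> * norm (x - p) < \<epsilon> * norm (x - p)"
    using \<epsilon> \<zeta> by simp
  then have "norm ((of_real \<epsilon> * \<zeta>) *s (x - p)) < \<epsilon> * norm (x - p)"
    using \<epsilon> by (simp only: norm_smult_vec norm_mult) simp
  then have "q \<in> \<Omega>"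
    unfolding q_def using \<delta> by (intro mem_if_norm_less_delta_dir) simp
  then have "x + exp (-2 * s) *\<^sub>R (q - x) \<in> \<Omega>"
    using x s by (intro open_convex_shrink_mem[OF op cv]) (auto simp: frontier_def)
  moreover have "x + exp (-2 * s) *\<^sub>R (q - x) = ray_point x p s + (of_real (\<epsilon> * exp (-2 * s)) * \<zeta>) *s (x - p)"
    by (simp add: ray_point_def q_def vec_eq_iff) (simp add: scaleR_conv_of_real algebra_simps)
  ultimately show ?thesis by simp
qed

lemma lempert_ray_point_le:
  fixes \<Omega> :: "(complex^'n) set"
  assumes op: "open \<Omega>" and cv: "convex \<Omega>" and p: "p \<in> \<Omega>" and x: "x \<in> frontier \<Omega>"
    and \<epsilon>: "\<epsilon> > 0" and \<delta>: "\<epsilon> * norm (x - p) \<le> delta_dir \<Omega> p (x - p)"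
    and s: "0 \<le> s" and t: "0 \<le> t" and lt1: "(exp (2 * \<bar>t - s\<bar>) - 1) / \<epsilon> < 1"
  shows "lempert \<Omega> (ray_point x p s) (ray_point x p t) \<le> artanh ((exp (2 * \<bar>t - s\<bar>) - 1) / \<epsilon>)"
proof -
  define f where "f \<zeta> = ray_point x p s + (of_real (\<epsilon> * exp (-2 * s)) * \<zeta>) *s (x - p)" for \<zeta>
  define r where "r = (1 - exp (2 * (s - t))) / \<epsilon>"
  have "holo_disc \<Omega> f"
    unfolding holo_disc_def using ray_point_disc_mem[OF op cv p x \<epsilon> \<delta> s]
    by (auto simp: f_def intro!: holomorphic_intros)
  moreover have r: "\<bar>r\<bar> \<le> (exp (2 * \<bar>t - s\<bar>) - 1) / \<epsilon>"
  proof -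
    have "\<bar>2 * (s - t)\<bar> = 2 * \<bar>t - s\<bar>" by (auto simp: abs_if)
    then show ?thesis
      unfolding r_def using abs_one_minus_exp_le[of "2 * (s - t)"] \<epsilon>
      by (simp add: abs_divide divide_right_mono)
  qed
  then have "of_real r \<in> ball (0::complex) 1" using lt1 by simp
  ultimately have "lempert \<Omega> (f 0) (f (of_real r)) \<le> artanh \<bar>r\<bar>"
    using lempert_le_poincare_dist[of \<Omega> f 0 "of_real r"] by (simp add: poincare_dist_def)
  also have "\<dots> \<le> artanh ((exp (2 * \<bar>t - s\<bar>) - 1) / \<epsilon>)"
    using r lt1 by (intro artanh_real_mono) auto
  also have "f 0 = ray_point x p s" by (simp add: f_def vec_eq_iff)
  also have "f (of_real r) = ray_point x p t"
  proof -
    have "f (of_real r) = x + (exp (-2 * s) - \<epsilon> * exp (-2 * s) * r) *\<^sub>R (p - x)"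
      unfolding f_def ray_point_def of_real_mult[symmetric] of_real_smult_vec
      by (simp add: scaleR_diff_left algebra_simps)
    also have "exp (-2 * s) - \<epsilon> * exp (-2 * s) * r = exp (-2 * t)"
      using \<epsilon> by (simp add: r_def field_simps flip: exp_add)
    finally show ?thesis unfolding ray_point_def .
  qed
  finally show ?thesis .
qed

text \<open>A single disc only gives artanh((e^{2|t_1 - t_2|} - 1)/\<epsilon>), which is not linear in
  |t_1 - t_2|; splitting into N equal steps and letting N \<rightarrow> \<infinity> recovers the derivative 2/\<epsilon>.\<close>

lemma kobayashi_dist_ray_point_le:
  fixes \<Omega> :: "(complex^'n) set"
  assumes op: "open \<Omega>" and cv: "convex \<Omega>" and p: "p \<in> \<Omega>" and x: "x \<in> frontier \<Omega>"
    and \<epsilon>: "\<epsilon> > 0" and \<delta>: "\<epsilon> * norm (x - p) \<le> delta_dir \<Omega> p (x - p)"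
    and t1: "0 \<le> t1" and t2: "0 \<le> t2"
  shows "kobayashi_dist \<Omega> (ray_point x p t1) (ray_point x p t2) \<le> 2 / \<epsilon> * \<bar>t1 - t2\<bar>"
proof -
  define T where "T = \<bar>t1 - t2\<bar>"
  define K where "K = kobayashi_dist \<Omega> (ray_point x p t1) (ray_point x p t2)"
  have xcl: "x \<in> closure \<Omega>" using x by (simp add: frontier_def)
  have chain: "K \<le> real N * artanh ((exp (2 * (T / real N)) - 1) / \<epsilon>)"
    if N: "N > 0" and lt1: "(exp (2 * (T / real N)) - 1) / \<epsilon> < 1" for N
  proof -
    define \<tau> where "\<tau> k = t1 + real k * (t2 - t1) / real N" for k
    have \<tau>_nonneg: "0 \<le> \<tau> k" if "k \<le> N" for k
    proof -
      have "\<tau> k = (1 - real k / real N) * t1 + (real k / real N) * t2"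
        using N by (simp add: \<tau>_def field_simps)
      moreover have "real k / real N \<le> 1" using that N by (simp add: divide_le_eq_1)
      ultimately show ?thesis using t1 t2 by simp
    qed
    have "K \<le> (\<Sum>i<N. lempert \<Omega> (ray_point x p (\<tau> i)) (ray_point x p (\<tau> (Suc i))))"
      unfolding K_def using N \<tau>_nonneg ray_point_mem[OF op cv p xcl]
      by (intro kobayashi_dist_le_chain[OF op cv]) (auto simp: \<tau>_def)
    also have "\<dots> \<le> (\<Sum>i<N. artanh ((exp (2 * (T / real N)) - 1) / \<epsilon>))"
    proof (rule sum_mono)
      fix i assume "i \<in> {..<N}"
      moreover have "\<tau> (Suc i) - \<tau> i = (t2 - t1) / real N"
        using N by (simp add: \<tau>_def field_simps)
      then have "\<bar>\<tau> (Suc i) - \<tau> i\<bar> = T / real N"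
        by (simp add: T_def abs_divide abs_minus_commute)
      ultimately show "lempert \<Omega> (ray_point x p (\<tau> i)) (ray_point x p (\<tau> (Suc i)))
          \<le> artanh ((exp (2 * (T / real N)) - 1) / \<epsilon>)"
        using lempert_ray_point_le[OF op cv p x \<epsilon> \<delta> \<tau>_nonneg \<tau>_nonneg, of i "Suc i"] lt1 by simp
    qed
    finally show ?thesis by simp
  qed
  show ?thesis
  proof (cases "T = 0")
    case True
    then show ?thesis using chain[of 1] \<epsilon> by (simp add: K_def T_def)
  next
    case False
    then have "T > 0" by (simp add: T_def)
    have "(\<lambda>N. real N * artanh ((exp (2 * (T / real N)) - 1) / \<epsilon>)) \<longlonglongrightarrow> 2 * (T * inverse \<epsilon>)"
      using \<open>T > 0\<close> \<epsilon> by real_asymp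
    moreover have "eventually (\<lambda>N. (exp (2 * (T / real N)) - 1) / \<epsilon> < 1) sequentially"
      using \<open>T > 0\<close> \<epsilon> by real_asymp
    then have "eventually (\<lambda>N. K \<le> real N * artanh ((exp (2 * (T / real N)) - 1) / \<epsilon>)) sequentially"
      using eventually_gt_at_top[of 0] by eventually_elim (rule chain)
    ultimately have "K \<le> 2 * (T * inverse \<epsilon>)"
      by (intro tendsto_lowerbound) auto
    then show ?thesis by (simp add: K_def T_def field_simps)
  qed
qed

theorem lemma3p2:
  fixes \<Omega> :: "(complex^'n) set" and p x :: "complex^'n" and \<epsilon> :: real
  assumes "open \<Omega>" and "convex \<Omega>" and "p \<in> \<Omega>" and "x \<in> frontier \<Omega>"
    and "\<epsilon> > 0" and "delta_dir \<Omega> p (x - p) \<ge> \<epsilon> * norm (x - p)"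
  shows "(\<forall>t1 t2. t1 \<ge> 0 \<longrightarrow> t2 \<ge> 0 \<longrightarrow>
            \<bar>t1 - t2\<bar> \<le> kobayashi_dist \<Omega> (x + exp (-2*t1) *\<^sub>R (p - x)) (x + exp (-2*t2) *\<^sub>R (p - x)) \<and>
            kobayashi_dist \<Omega> (x + exp (-2*t1) *\<^sub>R (p - x)) (x + exp (-2*t2) *\<^sub>R (p - x))
              \<le> 2 / \<epsilon> * \<bar>t1 - t2\<bar>)
       \<and> (\<lambda>t. x + exp (-2*t) *\<^sub>R (p - x)) ` {0..} = {p + s *\<^sub>R (x - p) | s. 0 \<le> s \<and> s < 1}
       \<and> quasi_geodesic (kobayashi_dist \<Omega>) (2 / \<epsilon>) 0 {0..} (\<lambda>t. x + exp (-2*t) *\<^sub>R (p - x))"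
proof -
  have lower: "\<bar>t1 - t2\<bar> \<le> kobayashi_dist \<Omega> (ray_point x p t1) (ray_point x p t2)"
    and upper: "kobayashi_dist \<Omega> (ray_point x p t1) (ray_point x p t2) \<le> 2 / \<epsilon> * \<bar>t1 - t2\<bar>"
    if "0 \<le> t1" "0 \<le> t2" for t1 t2
    using kobayashi_dist_ray_point_ge[OF assms(1-4) that] kobayashi_dist_ray_point_le[OF assms that]
    by auto
  have "x \<notin> \<Omega>" using assms(1,4) by (simp add: frontier_def interior_open)
  then have "\<epsilon> * norm (x - p) \<le> norm (x - p)" "x \<noteq> p"
    using assms(3,6) delta_dir_le_norm_diff[of x \<Omega> p] by auto
  then have "\<epsilon> \<le> 1" by simp
  then have half: "\<bar>t1 - t2\<bar> / (2 / \<epsilon>) \<le> \<bar>t1 - t2\<bar>" for t1 t2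
    using assms(5) mult_right_mono[of \<epsilon> 2 "\<bar>t1 - t2\<bar>"] by (simp add: field_simps)
  have "quasi_geodesic (kobayashi_dist \<Omega>) (2 / \<epsilon>) 0 {0..} (ray_point x p)"
    unfolding quasi_geodesic_def
    using order_trans[OF half lower] upper by simp
  then show ?thesis
    unfolding ray_point_def[symmetric] using lower upper ray_point_image by blast
qed

end
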